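(* Let $k$ be a perfect field of characteristic $p>0$, $P$ a finite poset, $R=\mathcal{R}_k[J(P)]$ the Hibi ring and $\mathfrak{m}=R_+$. Let $\overline{P}=P\cup\{-\infty,\infty\}$ and let $\Sigma$ be the set of functions $\psi:\overline{P}\to\mathbb{R}$ such that $\psi(\infty)=0$ and $0\le\psi(x)-\psi(y)\le1$ whenever $x\lessdot y$ in $\overline{P}$. Then \[ \operatorname{fpt}(\mathfrak{m})=\max\{\psi(-\infty)\mid\psi\in\Sigma\}. \]
   Context: $J(P)$ is the set of poset ideals of $P=\{p_1,\dots,p_N\}$ (down-closed subsets, including $\emptyset$ and $P$). The Hibi ring is $\mathcal{R}_k[J(P)]=k[\,T\prod_{p_i\in I}X_i\mid I\in J(P)\,]\subseteq k[T,X_1,\dots,X_N]$, each generator in degree $1$; $\mathfrak{m}=R_+$ is generated by these generators. In $\overline{P}$, $-\infty<x<\infty$ for all $x\in P$; $x\lessdot y$ means $x<y$ with no $z$ satisfying $x<z<y$. For a real $t\ge0$, the pair $(R,\mathfrak{m}^t)$ is $F$-pure if for all large $q=p^e$ there is $d\in\mathfrak{m}^{\lceil t(q-1)\rceil}$ such that the $R$-linear map $R\to R^{1/q}$, $1\mapsto d^{1/q}$, splits; $\operatorname{fpt}(\mathfrak{m})=\sup\{t\ge0\mid(R,\mathfrak{m}^t)\text{ is }F\text{-pure}\}$. *)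

theory Defs
  imports Complex_Main "HOL-Library.Poly_Mapping" "HOL-Computational_Algebra.Primes"
begin

text \<open>Polynomial ring k[T, X_p (p in P)]: monomials are exponent vectors indexed by
  'a option, where None stands for T and Some p for X_p.\<close>
type_synonym ('a, 'k) mpoly = "('a option \<Rightarrow>\<^sub>0 nat) \<Rightarrow>\<^sub>0 'k"

definition poset_ideals :: "'a::order set \<Rightarrow> 'a set set" where
  "poset_ideals P = {I. I \<subseteq> P \<and> (\<forall>x\<in>I. \<forall>y\<in>P. y \<le> x \<longrightarrow> y \<in> I)}"

definition hibi_gen :: "'a set \<Rightarrow> ('a, 'k::comm_ring_1) mpoly" where
  "hibi_gen I = Poly_Mapping.single
      (Poly_Mapping.single None 1 + (\<Sum>p\<in>I. Poly_Mapping.single (Some p) 1)) 1"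

inductive_set hibi_ring :: "'a::order set \<Rightarrow> ('a, 'k::comm_ring_1) mpoly set"
  for P :: "'a set" where
  const: "Poly_Mapping.single 0 c \<in> hibi_ring P"
| gen: "I \<in> poset_ideals P \<Longrightarrow> hibi_gen I \<in> hibi_ring P"
| add: "x \<in> hibi_ring P \<Longrightarrow> y \<in> hibi_ring P \<Longrightarrow> x + y \<in> hibi_ring P"
| mult: "x \<in> hibi_ring P \<Longrightarrow> y \<in> hibi_ring P \<Longrightarrow> x * y \<in> hibi_ring P"

definition is_ideal_in :: "'r::comm_ring_1 set \<Rightarrow> 'r set \<Rightarrow> bool" where
  "is_ideal_in R I \<longleftrightarrow> I \<subseteq> R \<and> 0 \<in> I \<and> (\<forall>x\<in>I. \<forall>y\<in>I. x + y \<in> I)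
      \<and> (\<forall>r\<in>R. \<forall>x\<in>I. r * x \<in> I)"

definition ideal_gen :: "'r::comm_ring_1 set \<Rightarrow> 'r set \<Rightarrow> 'r set" where
  "ideal_gen R S = \<Inter>{I. is_ideal_in R I \<and> S \<subseteq> I}"

fun ideal_pow :: "'r::comm_ring_1 set \<Rightarrow> 'r set \<Rightarrow> nat \<Rightarrow> 'r set" where
  "ideal_pow R I 0 = R"
| "ideal_pow R I (Suc n) = ideal_gen R {a * b | a b. a \<in> ideal_pow R I n \<and> b \<in> I}"

definition hibi_max :: "'a::order set \<Rightarrow> ('a, 'k::comm_ring_1) mpoly set" where
  "hibi_max P = ideal_gen (hibi_ring P) (hibi_gen ` poset_ideals P)"

text \<open>The R-linear map R -> R^{1/q}, 1 |-> d^{1/q} splits.  Identifying R^{1/q} with R via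
  x^{1/q} <-> x (so r acts on R^{1/q} as x |-> r^q x), a splitting is an additive
  map phi : R -> R with phi (r^q x) = r phi(x) and phi(d) = 1.\<close>
definition frob_splits :: "'r::comm_ring_1 set \<Rightarrow> nat \<Rightarrow> 'r \<Rightarrow> bool" where
  "frob_splits R q d \<longleftrightarrow> (\<exists>\<phi>. (\<forall>x\<in>R. \<phi> x \<in> R)
      \<and> (\<forall>x\<in>R. \<forall>y\<in>R. \<phi> (x + y) = \<phi> x + \<phi> y)
      \<and> (\<forall>r\<in>R. \<forall>x\<in>R. \<phi> (r ^ q * x) = r * \<phi> x)
      \<and> \<phi> d = 1)"

definition F_pure_pair :: "nat \<Rightarrow> 'r::comm_ring_1 set \<Rightarrow> 'r set \<Rightarrow> real \<Rightarrow> bool" where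
  "F_pure_pair p R m t \<longleftrightarrow> (\<exists>e0. \<forall>e\<ge>e0. \<exists>d\<in>ideal_pow R m (nat \<lceil>t * (real (p ^ e) - 1)\<rceil>).
      frob_splits R (p ^ e) d)"

definition fpt :: "nat \<Rightarrow> 'r::comm_ring_1 set \<Rightarrow> 'r set \<Rightarrow> real" where
  "fpt p R m = Sup {t. t \<ge> 0 \<and> F_pure_pair p R m t}"

datatype 'a ext = NegInf | Elt 'a | PosInf

definition ext_carrier :: "'a set \<Rightarrow> 'a ext set" where
  "ext_carrier P = {NegInf, PosInf} \<union> Elt ` P"

fun ext_less :: "'a::order ext \<Rightarrow> 'a ext \<Rightarrow> bool" where
  "ext_less NegInf y = (y \<noteq> NegInf)"
| "ext_less (Elt x) PosInf = True"
| "ext_less (Elt x) (Elt y) = (x < y)"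
| "ext_less _ _ = False"

definition ext_covers :: "'a::order set \<Rightarrow> 'a ext \<Rightarrow> 'a ext \<Rightarrow> bool" where
  "ext_covers P x y \<longleftrightarrow> x \<in> ext_carrier P \<and> y \<in> ext_carrier P \<and> ext_less x y
      \<and> \<not> (\<exists>z\<in>ext_carrier P. ext_less x z \<and> ext_less z y)"

definition Sigma_set :: "'a::order set \<Rightarrow> ('a ext \<Rightarrow> real) set" where
  "Sigma_set P = {\<psi>. \<psi> PosInf = 0 \<and>
      (\<forall>x y. ext_covers P x y \<longrightarrow> 0 \<le> \<psi> x - \<psi> y \<and> \<psi> x - \<psi> y \<le> 1)}"

end

theory Submission
  imports Defs
begin

text \<open>
  A monomial of the Hibi ring is an order-reversing function \<open>w\<close> from the extended poset
  \<open>P \<union> {-\<infinity>, \<infinity>}\<close> to the naturals with \<open>w(\<infinity>) = 0\<close>; its \<open>T\<close>-degree is \<open>w(-\<infinity>)\<close>,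
  and \<open>m\<^sup>n\<close> is spanned by the monomials of \<open>T\<close>-degree at least \<open>n\<close>.

  Lower bound: if \<open>w\<close> drops by at most \<open>q - 1\<close> along every cover, taking \<open>q\<close>-th roots of the
  coefficients of \<open>x\<^bsup>qz + w\<^esup>\<close> defines a splitting \<open>R\<^bsup>1/q\<^esup> \<rightarrow> R\<close> sending \<open>x\<^sup>w\<close> to 1.
  Rounding down \<open>(q - 1)\<psi>\<close> for \<open>\<psi> \<in> \<Sigma>\<close> gives such a \<open>w\<close> of \<open>T\<close>-degree
  \<open>\<lfloor>(q - 1)\<psi>(-\<infinity>)\<rfloor>\<close>, so \<open>(R, m\<^sup>t)\<close> is F-pure for \<open>t < \<psi>(-\<infinity>)\<close>.

  Upper bound: if a splitting \<open>\<phi>\<close> sends \<open>d \<in> m\<^sup>n\<close> to 1, then \<open>\<phi>(x\<^sup>w)\<close> has nonzero constant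
  term for some monomial \<open>x\<^sup>w\<close> of \<open>d\<close>. Were the drop of \<open>w\<close> across a cover at least \<open>q\<close>,
  there would be Hibi monomials with \<open>x\<^bsup>qb\<^esup> x\<^sup>w = x\<^bsup>qg\<^esup> x\<^bsup>w'\<^esup>\<close>, where \<open>b\<close> is constant
  across that cover while \<open>g\<close> drops by one there; comparing coefficients of \<open>x\<^sup>b\<close> in
  \<open>x\<^sup>b \<phi>(x\<^sup>w) = x\<^sup>g \<phi>(x\<^bsup>w'\<^esup>)\<close> gives a contradiction. So \<open>w/(q - 1) \<in> \<Sigma>\<close>, and
  \<open>n \<le> w(-\<infinity>)\<close> gives \<open>t \<le> w(-\<infinity>)/(q - 1)\<close>.

  The maximum over \<open>\<Sigma>\<close> is attained since rounding up preserves \<open>\<Sigma>\<close> and \<open>\<psi>(-\<infinity>)\<close> is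
  bounded by the size of the extended poset.
\<close>

lemma ceiling_le_floor_if_gap:
  fixes c s t :: real
  assumes "1 \<le> c * (s - t)"
  shows "\<lceil>t * c\<rceil> \<le> \<lfloor>c * s\<rfloor>"
proof -
  have "\<lceil>t * c\<rceil> \<le> \<lfloor>t * c + 1\<rfloor>" by linarith
  also have "\<dots> \<le> \<lfloor>c * s\<rfloor>" using assms by (intro floor_mono) (simp add: algebra_simps)
  finally show ?thesis .
qed

lemma Sup_eq_of_interval:
  fixes M :: real
  assumes "0 \<le> M" "F 0" "\<And>t. 0 \<le> t \<Longrightarrow> t < M \<Longrightarrow> F t" "\<And>t. F t \<Longrightarrow> t \<le> M"
  shows "Sup {t. 0 \<le> t \<and> F t} = M"
proof (rule cSup_eq_non_empty)
  show "{t. 0 \<le> t \<and> F t} \<noteq> {}" using assms(2) by blast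
  show "t \<le> M" if "t \<in> {t. 0 \<le> t \<and> F t}" for t using that assms(4) by blast
  show "M \<le> y" if ub: "\<And>t. t \<in> {t. 0 \<le> t \<and> F t} \<Longrightarrow> t \<le> y" for y
  proof (rule dense_le_bounded[of "-1"])
    show "-1 < M" using assms(1) by simp
    show "w \<le> y" if "-1 < w" "w < M" for w
    proof (cases "0 \<le> w")
      case True
      then show ?thesis using that assms(3) ub by blast
    next
      case False
      then show ?thesis using ub[of 0] assms(2) by simp
    qed
  qed
qed

section \<open>Covers in finite orders\<close>

definition covers_in :: "'b::order set \<Rightarrow> 'b \<Rightarrow> 'b \<Rightarrow> bool" where
  "covers_in S x y \<longleftrightarrow> x \<in> S \<and> y \<in> S \<and> x < y \<and> \<not> (\<exists>z\<in>S. x < z \<and> z < y)"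

lemma covers_inD:
  assumes "covers_in S x y"
  shows "x \<in> S" "y \<in> S" "x < y"
  using assms by (simp_all add: covers_in_def)

lemma covers_in_exists:
  assumes "finite S" "x \<in> S" "y \<in> S" "x < y"
  obtains z where "covers_in S x z" "z \<le> y"
proof -
  obtain z where z: "z \<in> {z\<in>S. x < z \<and> z \<le> y}"
    and min: "\<forall>w\<in>{z\<in>S. x < z \<and> z \<le> y}. w \<le> z \<longrightarrow> z = w"
    using finite_has_minimal[of "{z\<in>S. x < z \<and> z \<le> y}"] assms by auto
  have "covers_in S x z"
    using z min assms(2) unfolding covers_in_def by (auto intro: order.strict_implies_order)
  with z that show ?thesis by blast
qed

lemma covers_in_card_above_less:
  assumes "finite S" "covers_in S x z"
  shows "card {w\<in>S. z < w} < card {w\<in>S. x < w}"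
  using assms covers_inD[OF assms(2)]
  by (intro psubset_card_mono) (auto dest: order.strict_trans)

lemma covers_in_induct [consumes 4, case_names top step]:
  assumes "finite S" "x \<in> S" "y \<in> S" "x \<le> y"
    and top: "Q y"
    and step: "\<And>a b. covers_in S a b \<Longrightarrow> b \<le> y \<Longrightarrow> Q b \<Longrightarrow> Q a"
  shows "Q x"
  using assms(2,4)
proof (induction "card {w\<in>S. x < w}" arbitrary: x rule: less_induct)
  case (less x)
  show ?case
  proof (cases "x = y")
    case False
    with less.prems have "x < y" by simp
    then obtain z where z: "covers_in S x z" "z \<le> y"
      using covers_in_exists assms(1,3) less.prems(1) by metis
    have "Q z"
      using less.hyps[OF covers_in_card_above_less[OF assms(1) z(1)]] covers_inD(2)[OF z(1)] z(2) .
    then show ?thesis using step z by blast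
  qed (use top in simp)
qed

lemma antitone_if_covers_in:
  fixes f :: "'b::order \<Rightarrow> 'c::order"
  assumes "finite S" "\<And>a b. covers_in S a b \<Longrightarrow> f b \<le> f a"
    and "x \<in> S" "y \<in> S" "x \<le> y"
  shows "f y \<le> f x"
  using assms(1,3-5) by (induction rule: covers_in_induct) (auto dest: assms(2) order.trans)

lemma le_card_above_if_covers_in:
  fixes f :: "'b::order \<Rightarrow> real"
  assumes "finite S" "\<And>a b. covers_in S a b \<Longrightarrow> f a \<le> f b + 1"
    and "x \<in> S" "y \<in> S" "x \<le> y"
  shows "f x \<le> f y + card {z\<in>S. x < z}"
  using assms(1,3-5)
proof (induction rule: covers_in_induct)
  case (step a b)
  have "card {z\<in>S. b < z} + 1 \<le> card {z\<in>S. a < z}"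
    using covers_in_card_above_less[OF assms(1) step(1)] by simp
  then show ?case using assms(2)[OF step(1)] step(3) by linarith
qed simp

lemma covers_in_unique:
  assumes "covers_in S x y" "covers_in S x' y'" "x \<le> x'" "y' \<le> y"
  shows "x' = x" "y' = y"
proof -
  have "x' < y" using covers_inD(3)[OF assms(2)] assms(4) by (rule order.strict_trans2)
  then show "x' = x"
    using assms(1,3) covers_inD(1)[OF assms(2)] by (auto simp: covers_in_def order.order_iff_strict)
  have "x < y'" using assms(3) covers_inD(3)[OF assms(2)] by (rule order.strict_trans1)
  then show "y' = y"
    using assms(1,4) covers_inD(2)[OF assms(2)] by (auto simp: covers_in_def order.order_iff_strict)
qed

section \<open>The extended poset\<close>

instantiation ext :: (order) order
begin

definition less_ext :: "'a ext \<Rightarrow> 'a ext \<Rightarrow> bool" where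
  "less_ext = ext_less"

definition less_eq_ext :: "'a ext \<Rightarrow> 'a ext \<Rightarrow> bool" where
  "x \<le> y \<longleftrightarrow> x = y \<or> ext_less x y"

instance
proof
  fix x y z :: "'a ext"
  show "x < y \<longleftrightarrow> x \<le> y \<and> \<not> y \<le> x"
    by (cases x; cases y) (auto simp: less_ext_def less_eq_ext_def)
  show "x \<le> x"
    by (simp add: less_eq_ext_def)
  show "x \<le> y \<Longrightarrow> y \<le> z \<Longrightarrow> x \<le> z"
    by (cases x; cases y; cases z) (auto simp: less_eq_ext_def)
  show "x \<le> y \<Longrightarrow> y \<le> x \<Longrightarrow> x = y"
    by (cases x; cases y) (auto simp: less_eq_ext_def)
qed

end

lemma less_eq_ext_simps [simp]:
  "NegInf \<le> x" "x \<le> PosInf" "Elt a \<le> Elt b \<longleftrightarrow> a \<le> b"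
  "Elt a \<le> NegInf \<longleftrightarrow> False" "PosInf \<le> Elt a \<longleftrightarrow> False" "PosInf \<le> NegInf \<longleftrightarrow> False"
  by (cases x; auto simp: less_eq_ext_def order.order_iff_strict)+

lemma less_ext_simps [simp]:
  "Elt a < Elt b \<longleftrightarrow> a < b" "NegInf < Elt a" "Elt a < PosInf" "NegInf < PosInf"
  "x < NegInf \<longleftrightarrow> False" "PosInf < x \<longleftrightarrow> False"
  by (cases x; simp add: less_ext_def)+

lemma ext_carrier_simps [simp]:
  "NegInf \<in> ext_carrier P" "PosInf \<in> ext_carrier P" "Elt a \<in> ext_carrier P \<longleftrightarrow> a \<in> P"
  by (auto simp: ext_carrier_def)

lemma finite_ext_carrier: "finite P \<Longrightarrow> finite (ext_carrier P)"
  by (simp add: ext_carrier_def)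

lemma ext_covers_eq_covers_in [simp]: "ext_covers P = covers_in (ext_carrier P)"
  by (simp add: fun_eq_iff ext_covers_def covers_in_def less_ext_def)

lemma Sigma_setD:
  assumes "\<psi> \<in> Sigma_set P" "covers_in (ext_carrier P) x y"
  shows "\<psi> y \<le> \<psi> x" "\<psi> x \<le> \<psi> y + 1"
  using assms unfolding Sigma_set_def by force+

lemma Sigma_set_nonneg:
  assumes "finite P" "\<psi> \<in> Sigma_set P" "x \<in> ext_carrier P"
  shows "0 \<le> \<psi> x"
proof -
  have "\<psi> PosInf \<le> \<psi> x"
    using antitone_if_covers_in[of "ext_carrier P" \<psi> x PosInf] Sigma_setD(1)[OF assms(2)]
      finite_ext_carrier[OF assms(1)] assms(3)
    by simp
  then show ?thesis using assms(2) by (simp add: Sigma_set_def)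
qed

lemma Sigma_set_NegInf_le_card:
  assumes "finite P" "\<psi> \<in> Sigma_set P"
  shows "\<psi> NegInf \<le> card (ext_carrier P)"
proof -
  have "\<psi> NegInf \<le> \<psi> PosInf + card {z\<in>ext_carrier P. NegInf < z}"
    using le_card_above_if_covers_in[of "ext_carrier P" \<psi> NegInf PosInf] Sigma_setD(2)[OF assms(2)]
      finite_ext_carrier[OF assms(1)]
    by simp
  also have "\<dots> \<le> card (ext_carrier P)"
    using assms by (simp add: Sigma_set_def card_mono finite_ext_carrier)
  finally show ?thesis .
qed

lemma Sigma_set_ceiling:
  assumes "\<psi> \<in> Sigma_set P"
  shows "(\<lambda>x. of_int \<lceil>\<psi> x\<rceil>) \<in> Sigma_set P"
proof -
  have "0 \<le> real_of_int \<lceil>\<psi> x\<rceil> - of_int \<lceil>\<psi> y\<rceil>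
      \<and> real_of_int \<lceil>\<psi> x\<rceil> - of_int \<lceil>\<psi> y\<rceil> \<le> 1"
    if "covers_in (ext_carrier P) x y" for x y
    using ceiling_mono[OF Sigma_setD(1)[OF assms that]]
      ceiling_mono[OF Sigma_setD(2)[OF assms that]]
    by simp
  then show ?thesis using assms by (simp add: Sigma_set_def)
qed

lemma Sigma_set_has_max:
  assumes "finite P"
  obtains \<psi>\<^sub>0 where "\<psi>\<^sub>0 \<in> Sigma_set P" "\<And>\<psi>. \<psi> \<in> Sigma_set P \<Longrightarrow> \<psi> NegInf \<le> \<psi>\<^sub>0 NegInf"
proof -
  define N where "N = {n::nat. \<exists>\<psi>\<in>Sigma_set P. \<psi> NegInf = n}"
  have "N \<subseteq> {..card (ext_carrier P)}"
    using Sigma_set_NegInf_le_card[OF assms] by (force simp: N_def)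
  then have "finite N" by (rule finite_subset) simp
  moreover have "0 \<in> N"
    by (force simp: N_def Sigma_set_def)
  ultimately have "Max N \<in> N" by (intro Max_in) auto
  then obtain \<psi>\<^sub>0 where \<psi>\<^sub>0: "\<psi>\<^sub>0 \<in> Sigma_set P" "\<psi>\<^sub>0 NegInf = Max N"
    by (auto simp: N_def)
  have "\<psi> NegInf \<le> \<psi>\<^sub>0 NegInf" if \<psi>: "\<psi> \<in> Sigma_set P" for \<psi>
  proof -
    define n where "n = nat \<lceil>\<psi> NegInf\<rceil>"
    have "real n = of_int \<lceil>\<psi> NegInf\<rceil>"
      using Sigma_set_nonneg[OF assms \<psi>, of NegInf] by (simp add: n_def)
    then have "n \<in> N"
      using Sigma_set_ceiling[OF \<psi>] unfolding N_def by (intro CollectI bexI) auto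
    then have "n \<le> Max N" using \<open>finite N\<close> by simp
    moreover have "\<psi> NegInf \<le> n"
      using \<open>real n = _\<close> by simp
    ultimately show ?thesis using \<psi>\<^sub>0(2) by linarith
  qed
  with \<psi>\<^sub>0(1) that show ?thesis by blast
qed

section \<open>Monomials of the Hibi ring\<close>

abbreviation lookup where "lookup \<equiv> Poly_Mapping.lookup"
abbreviation keys where "keys \<equiv> Poly_Mapping.keys"

lemma poly_mapping_sum_single: "f = (\<Sum>k\<in>keys f. Poly_Mapping.single k (lookup f k))"
  by (rule poly_mapping_eqI) (simp add: lookup_sum lookup_single when_def in_keys_iff)

lemma lookup_single_mult:
  fixes a :: "'m::cancel_comm_monoid_add" and c :: "'b::comm_semiring_1"
  shows "lookup (Poly_Mapping.single a c * f) (a + k) = c * lookup f k"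
proof -
  have "Poly_Mapping.single a c * f = (\<Sum>j\<in>keys f. Poly_Mapping.single (a + j) (c * lookup f j))"
    by (subst poly_mapping_sum_single[of f]) (simp add: sum_distrib_left mult_single)
  then show ?thesis
    by (simp add: lookup_sum lookup_single when_def in_keys_iff)
qed

lemma CHAR_poly_mapping: "CHAR('m::monoid_add \<Rightarrow>\<^sub>0 'k::semiring_1) = CHAR('k)"
proof (rule CHAR_eqI)
  have eq: "(of_nat n :: 'm \<Rightarrow>\<^sub>0 'k) = 0 \<longleftrightarrow> (of_nat n :: 'k) = 0" for n
  proof -
    have "Poly_Mapping.single (0::'m) (c::'k) = 0 \<longleftrightarrow> c = 0" for c
      by (metis lookup_single_eq lookup_zero single_zero)
    from this[of "of_nat n"] show ?thesis by (simp only: single_of_nat)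
  qed
  show "(of_nat CHAR('k) :: 'm \<Rightarrow>\<^sub>0 'k) = 0" by (simp add: eq)
  show "CHAR('k) dvd n" if "(of_nat n :: 'm \<Rightarrow>\<^sub>0 'k) = 0" for n
    using that by (simp add: eq of_nat_eq_0_iff_char_dvd)
qed

type_synonym 'a monomial = "'a option \<Rightarrow>\<^sub>0 nat"

definition expo :: "'a monomial \<Rightarrow> 'a ext \<Rightarrow> int" where
  "expo w x = (case x of NegInf \<Rightarrow> int (lookup w None) | Elt a \<Rightarrow> int (lookup w (Some a))
      | PosInf \<Rightarrow> 0)"

lemma expo_simps [simp]:
  "expo w NegInf = int (lookup w None)" "expo w (Elt a) = int (lookup w (Some a))"
  "expo w PosInf = 0"
  by (simp_all add: expo_def)

lemma expo_add [simp]: "expo (v + w) x = expo v x + expo w x"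
  by (cases x) (simp_all add: lookup_add)

lemma expo_zero [simp]: "expo 0 x = 0"
  by (cases x) simp_all

lemma expo_sum: "expo (sum f A) x = (\<Sum>i\<in>A. expo (f i) x)"
  by (induction A rule: infinite_finite_induct) simp_all

lemma expo_nonneg: "0 \<le> expo w x"
  by (cases x) simp_all

lemma monomial_eqI_expo:
  assumes "keys v \<subseteq> insert None (Some ` P)" "keys w \<subseteq> insert None (Some ` P)"
    and "\<And>x. x \<in> ext_carrier P \<Longrightarrow> expo v x = expo w x"
  shows "v = w"
proof (rule poly_mapping_eqI)
  fix i show "lookup v i = lookup w i"
  proof (cases i)
    case None then show ?thesis using assms(3)[of NegInf] by simp
  next
    case (Some a)
    show ?thesis
    proof (cases "a \<in> P")
      case True then show ?thesis using Some assms(3)[of "Elt a"] by simp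
    next
      case False
      then have "i \<notin> keys v" "i \<notin> keys w" using Some assms(1,2) by auto
      then show ?thesis by (simp add: in_keys_iff)
    qed
  qed
qed

definition hibi_mon :: "'a::order set \<Rightarrow> 'a monomial \<Rightarrow> bool" where
  "hibi_mon P w \<longleftrightarrow> keys w \<subseteq> insert None (Some ` P)
      \<and> (\<forall>x y. covers_in (ext_carrier P) x y \<longrightarrow> expo w y \<le> expo w x)"

lemma hibi_monD:
  assumes "hibi_mon P w"
  shows "keys w \<subseteq> insert None (Some ` P)"
    and "covers_in (ext_carrier P) x y \<Longrightarrow> expo w y \<le> expo w x"
  using assms by (auto simp: hibi_mon_def)

lemma hibi_mon_zero [simp]: "hibi_mon P 0"
  by (simp add: hibi_mon_def)

lemma hibi_mon_add:
  assumes "hibi_mon P v" "hibi_mon P w"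
  shows "hibi_mon P (v + w)"
proof -
  have "keys (v + w) \<subseteq> insert None (Some ` P)"
    using keys_add[of v w] hibi_monD(1)[OF assms(1)] hibi_monD(1)[OF assms(2)] by blast
  moreover have "expo (v + w) y \<le> expo (v + w) x" if "covers_in (ext_carrier P) x y" for x y
    using hibi_monD(2)[OF assms(1) that] hibi_monD(2)[OF assms(2) that] by simp
  ultimately show ?thesis by (simp add: hibi_mon_def)
qed

lemma hibi_mon_sum: "(\<And>i. i \<in> A \<Longrightarrow> hibi_mon P (f i)) \<Longrightarrow> hibi_mon P (sum f A)"
  by (induction A rule: infinite_finite_induct) (auto intro!: hibi_mon_add)

lemma hibi_mon_lookup_outside:
  assumes "hibi_mon P w" "a \<notin> P"
  shows "lookup w (Some a) = 0"
proof -
  have "Some a \<notin> keys w" using hibi_monD(1)[OF assms(1)] assms(2) by auto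
  then show ?thesis by (simp add: in_keys_iff)
qed

lemma hibi_mon_antitone:
  assumes "finite P" "hibi_mon P w" "x \<in> ext_carrier P" "y \<in> ext_carrier P" "x \<le> y"
  shows "expo w y \<le> expo w x"
  using antitone_if_covers_in[of "ext_carrier P" "expo w" x y] hibi_monD(2)[OF assms(2)]
    finite_ext_carrier[OF assms(1)] assms(3-5)
  by simp

lemma hibi_mon_of_fun:
  fixes W :: "'a::order ext \<Rightarrow> int"
  assumes "finite P" "W PosInf = 0" "\<And>x y. covers_in (ext_carrier P) x y \<Longrightarrow> W y \<le> W x"
  obtains w where "hibi_mon P w" "\<And>x. x \<in> ext_carrier P \<Longrightarrow> expo w x = W x"
proof -
  have W_nonneg: "0 \<le> W x" if "x \<in> ext_carrier P" for x
    using antitone_if_covers_in[of "ext_carrier P" W x PosInf] assms that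
    by (simp add: finite_ext_carrier)
  define f where "f i = (case i of None \<Rightarrow> nat (W NegInf)
      | Some a \<Rightarrow> if a \<in> P then nat (W (Elt a)) else 0)" for i
  have "{i. f i \<noteq> 0} \<subseteq> insert None (Some ` P)"
  proof
    fix i assume "i \<in> {i. f i \<noteq> 0}"
    then show "i \<in> insert None (Some ` P)" by (cases i) (auto simp: f_def split: if_splits)
  qed
  then have fin: "finite {i. f i \<noteq> 0}"
    using assms(1) by (rule finite_subset[OF _ finite_insert[THEN iffD2, OF finite_imageI]])
  define w where "w = Abs_poly_mapping f"
  have lookup_w: "lookup w = f"
    using fin by (simp add: w_def)
  have keys_w: "keys w \<subseteq> insert None (Some ` P)"
    using \<open>{i. f i \<noteq> 0} \<subseteq> _\<close> by (auto simp: in_keys_iff lookup_w)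
  have expo_w: "expo w x = W x" if "x \<in> ext_carrier P" for x
    using W_nonneg[OF that] that assms(2) by (cases x) (simp_all add: lookup_w f_def)
  have "hibi_mon P w"
    unfolding hibi_mon_def
  proof (intro conjI keys_w allI impI)
    fix x y assume c: "covers_in (ext_carrier P) x y"
    then show "expo w y \<le> expo w x"
      using assms(3)[OF c] expo_w[OF covers_inD(1)[OF c]] expo_w[OF covers_inD(2)[OF c]] by simp
  qed
  with expo_w that show ?thesis by blast
qed

definition gen_mon :: "'a set \<Rightarrow> 'a monomial" where
  "gen_mon I = Poly_Mapping.single None 1 + (\<Sum>p\<in>I. Poly_Mapping.single (Some p) 1)"

lemma hibi_gen_eq: "hibi_gen I = Poly_Mapping.single (gen_mon I) 1"
  by (simp add: hibi_gen_def gen_mon_def)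

lemma lookup_gen_mon:
  assumes "finite I"
  shows "lookup (gen_mon I) None = 1" "lookup (gen_mon I) (Some a) = (if a \<in> I then 1 else 0)"
  using assms by (simp_all add: gen_mon_def lookup_add lookup_sum lookup_single when_def)

lemma finite_poset_ideal: "finite P \<Longrightarrow> I \<in> poset_ideals P \<Longrightarrow> finite I"
  unfolding poset_ideals_def by (auto intro: finite_subset)

lemma hibi_mon_gen_mon:
  assumes "finite P" "I \<in> poset_ideals P"
  shows "hibi_mon P (gen_mon I)"
proof -
  have fin: "finite I" using finite_poset_ideal[OF assms] .
  have sub: "I \<subseteq> P" and down: "\<And>a b. a \<in> I \<Longrightarrow> b \<in> P \<Longrightarrow> b \<le> a \<Longrightarrow> b \<in> I"
    using assms(2) by (auto simp: poset_ideals_def)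
  have "keys (gen_mon I) \<subseteq> insert None (Some ` P)"
  proof
    fix i assume "i \<in> keys (gen_mon I)"
    then show "i \<in> insert None (Some ` P)"
      using sub by (cases i) (auto simp: in_keys_iff lookup_gen_mon[OF fin] split: if_splits)
  qed
  moreover have "expo (gen_mon I) y \<le> expo (gen_mon I) x" if "covers_in (ext_carrier P) x y" for x y
    using covers_inD[OF that] down
    by (cases x; cases y) (auto simp: lookup_gen_mon[OF fin] less_le)
  ultimately show ?thesis by (simp add: hibi_mon_def)
qed

lemma hibi_mon_decompose:
  assumes "finite P" "hibi_mon P w" "0 < lookup w None"
  obtains I w' where "I \<in> poset_ideals P" "hibi_mon P w'" "lookup w' None = lookup w None - 1"
    "w = gen_mon I + w'"
proof -
  define I where "I = {a\<in>P. 0 < lookup w (Some a)}"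
  define w' where "w' = Poly_Mapping.map (\<lambda>n. n - 1) w"
  have lookup_w': "lookup w' i = lookup w i - 1" for i
    by (simp add: w'_def map.rep_eq when_def)
  have fin: "finite I" using assms(1) by (simp add: I_def)
  have mem_I: "a \<in> I \<longleftrightarrow> a \<in> P \<and> 0 < lookup w (Some a)" for a
    by (simp add: I_def)
  have "I \<in> poset_ideals P"
  proof -
    have "b \<in> I" if "a \<in> I" "b \<in> P" "b \<le> a" for a b
      using hibi_mon_antitone[OF assms(1,2), of "Elt b" "Elt a"] that by (auto simp: I_def)
    then show ?thesis by (auto simp: poset_ideals_def I_def)
  qed
  moreover have "hibi_mon P w'"
  proof -
    have "keys w' \<subseteq> keys w" by (auto simp: in_keys_iff lookup_w')
    moreover have "expo w' y \<le> expo w' x" if "covers_in (ext_carrier P) x y" for x y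
      using hibi_monD(2)[OF assms(2) that] by (cases x; cases y) (auto simp: lookup_w')
    ultimately show ?thesis using hibi_monD(1)[OF assms(2)] by (auto simp: hibi_mon_def)
  qed
  moreover have "w = gen_mon I + w'"
  proof (rule poly_mapping_eqI)
    fix i show "lookup w i = lookup (gen_mon I + w') i"
      using assms(3) hibi_mon_lookup_outside[OF assms(2)]
      by (cases i) (auto simp: lookup_add lookup_gen_mon[OF fin] lookup_w' mem_I)
  qed
  ultimately show ?thesis using that lookup_w' by blast
qed

lemma hibi_mon_T_degree_zero:
  assumes "finite P" "hibi_mon P w" "lookup w None = 0"
  shows "w = 0"
proof (rule monomial_eqI_expo[OF hibi_monD(1)[OF assms(2)]])
  fix x assume "x \<in> ext_carrier P"
  then show "expo w x = expo 0 x"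
    using hibi_mon_antitone[OF assms(1,2), of NegInf x] expo_nonneg[of w x] assms(3) by simp
qed simp

section \<open>Powers of the maximal ideal\<close>

lemma subset_ideal_gen: "S \<subseteq> ideal_gen R S"
  unfolding ideal_gen_def by blast

lemma ideal_gen_least: "is_ideal_in R I \<Longrightarrow> S \<subseteq> I \<Longrightarrow> ideal_gen R S \<subseteq> I"
  unfolding ideal_gen_def by blast

lemma hibi_gen_in_hibi_max: "I \<in> poset_ideals P \<Longrightarrow> hibi_gen I \<in> hibi_max P"
  unfolding hibi_max_def using subset_ideal_gen by blast

lemma single_in_ideal_pow_hibi_max:
  assumes "finite P" "hibi_mon P w" "n \<le> lookup w None"
  shows "Poly_Mapping.single w (1::'k::comm_ring_1) \<in> ideal_pow (hibi_ring P) (hibi_max P) n"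
  using assms(2,3)
proof (induction "lookup w None" arbitrary: w n)
  case 0
  then have "w = 0" using hibi_mon_T_degree_zero[OF assms(1)] by simp
  then show ?case using 0 hibi_ring.const[of 1 P] by simp
next
  case (Suc m)
  obtain I w' where I: "I \<in> poset_ideals P" and w': "hibi_mon P w'" "lookup w' None = m"
    and w: "w = gen_mon I + w'"
    using hibi_mon_decompose[OF assms(1) Suc.prems(1)] Suc.hyps(2)
    by (metis diff_Suc_1 zero_less_Suc)
  have IH: "k \<le> m \<Longrightarrow> Poly_Mapping.single w' (1::'k) \<in> ideal_pow (hibi_ring P) (hibi_max P) k" for k
    using Suc.hyps(1)[OF w'(2)[symmetric] w'(1)] w'(2) by simp
  have w_eq: "Poly_Mapping.single w (1::'k) = Poly_Mapping.single w' 1 * hibi_gen I"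
    by (simp add: w hibi_gen_eq mult_single add.commute)
  show ?case
  proof (cases n)
    case 0
    then show ?thesis
      using IH[of 0] w_eq hibi_ring.mult hibi_ring.gen[OF I] by fastforce
  next
    case (Suc k)
    then have "Poly_Mapping.single w' (1::'k) \<in> ideal_pow (hibi_ring P) (hibi_max P) k"
      using IH \<open>n \<le> lookup w None\<close> \<open>Suc m = lookup w None\<close> by simp
    then show ?thesis
      using Suc w_eq hibi_gen_in_hibi_max[OF I] subset_ideal_gen by fastforce
  qed
qed

lemma zero_in_hibi_ring [simp]: "0 \<in> hibi_ring P"
  using hibi_ring.const[of 0 P] by simp

lemma sum_in_hibi_ring: "(\<And>i. i \<in> A \<Longrightarrow> f i \<in> hibi_ring P) \<Longrightarrow> sum f A \<in> hibi_ring P"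
  by (induction A rule: infinite_finite_induct) (simp_all add: hibi_ring.add)

lemma hibi_ring_iff:
  assumes "finite P"
  shows "(f :: ('a::order, 'k::comm_ring_1) mpoly) \<in> hibi_ring P \<longleftrightarrow> (\<forall>w\<in>keys f. hibi_mon P w)"
proof
  show "f \<in> hibi_ring P \<Longrightarrow> \<forall>w\<in>keys f. hibi_mon P w"
  proof (induction rule: hibi_ring.induct)
    case (gen I)
    then show ?case by (simp add: hibi_gen_eq hibi_mon_gen_mon[OF assms])
  next
    case (add x y)
    then show ?case using keys_add[of x y] by blast
  next
    case (mult x y)
    then show ?case using keys_mult[of x y] by (fastforce intro: hibi_mon_add)
  qed simp
next
  assume keys: "\<forall>w\<in>keys f. hibi_mon P w"
  have "Poly_Mapping.single w (lookup f w) \<in> hibi_ring P" if "w \<in> keys f" for w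
  proof -
    have "Poly_Mapping.single w (1::'k) \<in> hibi_ring P"
      using single_in_ideal_pow_hibi_max[OF assms, of w 0] keys that by simp
    then have "Poly_Mapping.single 0 (lookup f w) * Poly_Mapping.single w 1 \<in> hibi_ring P"
      by (intro hibi_ring.mult hibi_ring.const)
    then show ?thesis by (simp add: mult_single)
  qed
  then have "(\<Sum>w\<in>keys f. Poly_Mapping.single w (lookup f w)) \<in> hibi_ring P"
    by (rule sum_in_hibi_ring)
  then show "f \<in> hibi_ring P" by (subst poly_mapping_sum_single)
qed

lemma single_in_hibi_ring:
  "finite P \<Longrightarrow> hibi_mon P w \<Longrightarrow> Poly_Mapping.single w (c::'k::comm_ring_1) \<in> hibi_ring P"
  by (simp add: hibi_ring_iff)

definition hibi_T_deg_ge :: "'a::order set \<Rightarrow> nat \<Rightarrow> ('a, 'k::comm_ring_1) mpoly set" where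
  "hibi_T_deg_ge P n = {f\<in>hibi_ring P. \<forall>w\<in>keys f. n \<le> lookup w None}"

lemma T_degree_mult_ge:
  fixes f g :: "('a, 'k::comm_ring_1) mpoly"
  assumes "\<forall>w\<in>keys f. m \<le> lookup w None" "\<forall>w\<in>keys g. n \<le> lookup w None"
  shows "\<forall>w\<in>keys (f * g). m + n \<le> lookup w None"
proof
  fix w assume "w \<in> keys (f * g)"
  then obtain a b where "w = a + b" "a \<in> keys f" "b \<in> keys g"
    using keys_mult[of f g] by blast
  moreover have "m \<le> lookup a None" "n \<le> lookup b None"
    using assms \<open>a \<in> keys f\<close> \<open>b \<in> keys g\<close> by blast+
  ultimately show "m + n \<le> lookup w None" by (simp add: lookup_add add_mono)
qed

lemma is_ideal_hibi_T_deg_ge: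
  "is_ideal_in (hibi_ring P) (hibi_T_deg_ge P n :: ('a::order, 'k::comm_ring_1) mpoly set)"
proof -
  have "x + y \<in> hibi_T_deg_ge P n" if "x \<in> hibi_T_deg_ge P n" "y \<in> hibi_T_deg_ge P n"
    for x y :: "('a, 'k) mpoly"
    using that keys_add[of x y] by (auto simp: hibi_T_deg_ge_def intro: hibi_ring.add)
  moreover have "r * x \<in> hibi_T_deg_ge P n" if "r \<in> hibi_ring P" "x \<in> hibi_T_deg_ge P n"
    for r x :: "('a, 'k) mpoly"
    using that T_degree_mult_ge[of r 0 x n]
    by (auto simp: hibi_T_deg_ge_def intro: hibi_ring.mult)
  moreover have "(0 :: ('a, 'k) mpoly) \<in> hibi_T_deg_ge P n"
    using hibi_ring.const[of 0 P] by (simp add: hibi_T_deg_ge_def)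
  moreover have "hibi_T_deg_ge P n \<subseteq> (hibi_ring P :: ('a, 'k) mpoly set)"
    by (auto simp: hibi_T_deg_ge_def)
  ultimately show ?thesis unfolding is_ideal_in_def by blast
qed

lemma ideal_pow_hibi_max_subset:
  assumes "finite P"
  shows "ideal_pow (hibi_ring P) (hibi_max P) n
    \<subseteq> (hibi_T_deg_ge P n :: ('a::order, 'k::comm_ring_1) mpoly set)"
proof (induction n)
  case 0
  then show ?case by (auto simp: hibi_T_deg_ge_def)
next
  case (Suc n)
  have "hibi_max P \<subseteq> (hibi_T_deg_ge P 1 :: ('a, 'k) mpoly set)"
    unfolding hibi_max_def
    by (rule ideal_gen_least[OF is_ideal_hibi_T_deg_ge])
      (auto simp: hibi_T_deg_ge_def hibi_gen_eq lookup_gen_mon finite_poset_ideal[OF assms]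
        intro: hibi_ring.gen[unfolded hibi_gen_eq])
  then have "a * b \<in> (hibi_T_deg_ge P (Suc n) :: ('a, 'k) mpoly set)"
    if "a \<in> hibi_T_deg_ge P n" "b \<in> hibi_max P" for a b
    using that T_degree_mult_ge[of a n b 1] by (auto simp: hibi_T_deg_ge_def intro: hibi_ring.mult)
  with Suc.IH show ?case
    by (auto intro!: ideal_gen_least[OF is_ideal_hibi_T_deg_ge])
qed

section \<open>Frobenius splittings from monomials\<close>

definition frob_root :: "nat \<Rightarrow> 'k::field \<Rightarrow> 'k" where
  "frob_root q c = (SOME y. y ^ q = c)"

locale perfect_field_char =
  fixes p :: nat and field_type :: "'k::field itself"
  assumes prime_p: "prime p" and CHAR_eq: "CHAR('k) = p" and pth_roots: "\<forall>x::'k. \<exists>y. y ^ p = x"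
begin

lemma prime_CHAR: "prime CHAR('k)"
  using prime_p CHAR_eq by simp

lemma power_add_frob: "((x::'k) + y) ^ (p ^ e) = x ^ (p ^ e) + y ^ (p ^ e)"
  using freshmans_dream'[OF prime_CHAR, of "p ^ e" e] CHAR_eq by simp

lemma power_sum_frob_mpoly: "(sum f A :: ('a, 'k) mpoly) ^ (p ^ e) = (\<Sum>i\<in>A. f i ^ (p ^ e))"
proof -
  have "prime CHAR(('a, 'k) mpoly)" using prime_CHAR by (simp add: CHAR_poly_mapping)
  then show ?thesis
    using freshmans_dream_sum'[where 'a = "('a, 'k) mpoly", of "p ^ e" e f A]
    by (simp add: CHAR_poly_mapping CHAR_eq)
qed

lemma ex_frob_root: "\<exists>y::'k. y ^ (p ^ e) = c"
proof (induction e arbitrary: c)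
  case (Suc e)
  obtain z where "z ^ (p ^ e) = c" using Suc by blast
  moreover obtain y :: 'k where "y ^ p = z" using pth_roots by blast
  ultimately have "y ^ (p ^ Suc e) = c" by (simp add: power_mult)
  then show ?case by blast
qed simp

lemma frob_inj: "(x::'k) ^ (p ^ e) = y ^ (p ^ e) \<Longrightarrow> x = y"
  using power_add_frob[of "x - y" y] by simp

lemma frob_root_power [simp]: "frob_root (p ^ e) (c::'k) ^ (p ^ e) = c"
  unfolding frob_root_def using ex_frob_root[of e c] by (rule someI_ex)

lemma frob_root_unique: "(y::'k) ^ (p ^ e) = c \<Longrightarrow> frob_root (p ^ e) c = y"
  using frob_inj[of "frob_root (p ^ e) c" e y] by simp

lemma frob_root_add: "frob_root (p ^ e) ((a::'k) + b) = frob_root (p ^ e) a + frob_root (p ^ e) b"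
  by (rule frob_root_unique) (simp add: power_add_frob)

lemma frob_root_mult: "frob_root (p ^ e) ((a::'k) * b) = frob_root (p ^ e) a * frob_root (p ^ e) b"
  by (rule frob_root_unique) (simp add: power_mult_distrib)

lemma frob_root_of_power [simp]: "frob_root (p ^ e) ((c::'k) ^ p ^ e) = c"
  by (rule frob_root_unique) simp

lemma frob_root_1 [simp]: "frob_root (p ^ e) (1::'k) = 1"
  by (rule frob_root_unique) simp

lemma frob_root_eq_0_iff [simp]: "frob_root (p ^ e) (c::'k) = 0 \<longleftrightarrow> c = 0"
proof
  assume "frob_root (p ^ e) c = 0"
  then show "c = 0"
    using frob_root_power[of e c] prime_gt_0_nat[OF prime_p] by (simp add: zero_power)
next
  assume "c = 0"
  then show "frob_root (p ^ e) c = 0"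
    using prime_gt_0_nat[OF prime_p] by (intro frob_root_unique) simp
qed

end

definition mon_smul :: "nat \<Rightarrow> 'a monomial \<Rightarrow> 'a monomial" where
  "mon_smul q z = Poly_Mapping.map ((*) q) z"

lemma lookup_mon_smul [simp]: "lookup (mon_smul q z) i = q * lookup z i"
  by (simp add: mon_smul_def map.rep_eq when_def)

lemma expo_mon_smul [simp]: "expo (mon_smul q z) x = int q * expo z x"
  by (cases x) simp_all

lemma mon_smul_add: "mon_smul q (a + b) = mon_smul q a + mon_smul q b"
  by (rule poly_mapping_eqI) (simp add: lookup_add algebra_simps)

lemma mon_smul_0 [simp]: "mon_smul q 0 = 0" "mon_smul 0 z = 0"
  by (rule poly_mapping_eqI, simp)+

lemma mon_smul_inj: "0 < q \<Longrightarrow> mon_smul q z = mon_smul q z' \<longleftrightarrow> z = z'"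
  by (auto simp: poly_mapping_eq_iff fun_eq_iff)

lemma single_power:
  "Poly_Mapping.single a (c::'b::comm_semiring_1) ^ n = Poly_Mapping.single (mon_smul n a) (c ^ n)"
proof (induction n)
  case (Suc n)
  have "mon_smul (Suc n) a = a + mon_smul n a"
    by (rule poly_mapping_eqI) (simp add: lookup_add)
  with Suc show ?case by (simp add: mult_single)
qed simp

lemma hibi_mon_mon_smul:
  assumes "hibi_mon P z"
  shows "hibi_mon P (mon_smul q z)"
proof -
  have "keys (mon_smul q z) \<subseteq> keys z" by (auto simp: in_keys_iff)
  then show ?thesis
    using assms by (auto simp: hibi_mon_def mult_left_mono)
qed

definition gaps_below :: "'a::order set \<Rightarrow> nat \<Rightarrow> 'a monomial \<Rightarrow> bool" where
  "gaps_below P q u \<longleftrightarrow> (\<forall>x y. covers_in (ext_carrier P) x y \<longrightarrow> expo u x - expo u y < int q)"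

lemma gaps_belowD: "gaps_below P q u \<Longrightarrow> covers_in (ext_carrier P) x y \<Longrightarrow> expo u x - expo u y < int q"
  by (simp add: gaps_below_def)

text \<open>Across a cover, \<open>q\<close> times the drop of \<open>expo z - expo a\<close> equals the drop of \<open>b\<close> minus
  the drop of \<open>u\<close>, which exceeds \<open>-q\<close>; so \<open>expo z - expo a\<close> is again order-reversing.\<close>
lemma hibi_mon_quotient:
  assumes "finite P" "0 < q" "hibi_mon P a" "hibi_mon P b" "gaps_below P q u"
    and eq: "mon_smul q z + u = mon_smul q a + b"
  obtains c where "hibi_mon P c" "z = a + c"
proof -
  define D where "D x = expo z x - expo a x" for x
  have expo_eq: "int q * expo z x + expo u x = int q * expo a x + expo b x" for x
    using arg_cong[OF eq, of "\<lambda>w. expo w x"] by simp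
  have "D y \<le> D x" if c: "covers_in (ext_carrier P) x y" for x y
  proof -
    have "int q * (D y - D x) = (expo b y - expo b x) + (expo u x - expo u y)"
      using expo_eq[of x] expo_eq[of y] by (simp add: D_def algebra_simps)
    also have "\<dots> < int q * 1"
      using hibi_monD(2)[OF assms(4) c] gaps_belowD[OF assms(5) c] by simp
    finally show ?thesis using assms(2) by (simp add: mult_less_cancel_left_pos)
  qed
  then obtain c where c: "hibi_mon P c" "\<And>x. x \<in> ext_carrier P \<Longrightarrow> expo c x = D x"
    using hibi_mon_of_fun[OF assms(1), of D] by (auto simp: D_def)
  have "keys z \<subseteq> insert None (Some ` P)"
  proof
    fix i assume i: "i \<in> keys z"
    have outside: "lookup z (Some a') = 0" if "a' \<notin> P" for a'
      using arg_cong[OF eq, of "\<lambda>w. lookup w (Some a')"] assms(2) that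
        hibi_mon_lookup_outside[OF assms(3) that] hibi_mon_lookup_outside[OF assms(4) that]
      by (simp add: lookup_add)
    show "i \<in> insert None (Some ` P)"
    proof (cases i)
      case (Some a')
      then have "a' \<in> P" using i outside[of a'] by (auto simp: in_keys_iff)
      with Some show ?thesis by simp
    qed simp
  qed
  then have "z = a + c"
    using hibi_monD(1)[OF hibi_mon_add[OF assms(3) c(1)]] c(2)
    by (intro monomial_eqI_expo) (auto simp: D_def)
  with c(1) that show ?thesis by blast
qed

definition split_map :: "nat \<Rightarrow> 'a monomial \<Rightarrow> ('a, 'k::field) mpoly \<Rightarrow> ('a, 'k) mpoly" where
  "split_map q u f = Abs_poly_mapping (\<lambda>z. frob_root q (lookup f (mon_smul q z + u)))"

context perfect_field_char
begin

lemma frob_power_pos: "0 < p ^ e"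
  using prime_gt_0_nat[OF prime_p] by simp

lemma lookup_split_map:
  "lookup (split_map (p ^ e) u (f :: ('a, 'k) mpoly)) z
    = frob_root (p ^ e) (lookup f (mon_smul (p ^ e) z + u))"
proof -
  have "{z. frob_root (p ^ e) (lookup f (mon_smul (p ^ e) z + u)) \<noteq> 0}
      \<subseteq> (\<lambda>z. mon_smul (p ^ e) z + u) -` keys f"
    by (auto simp: in_keys_iff)
  moreover have "finite ((\<lambda>z. mon_smul (p ^ e) z + u) -` keys f)"
    by (intro finite_vimageI) (auto simp: inj_def mon_smul_inj[OF frob_power_pos])
  ultimately show ?thesis
    unfolding split_map_def by (subst lookup_Abs_poly_mapping) (auto intro: finite_subset)
qed

lemma split_map_add:
  "split_map (p ^ e) u (f + g :: ('a, 'k) mpoly) = split_map (p ^ e) u f + split_map (p ^ e) u g"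
  by (rule poly_mapping_eqI) (simp add: lookup_split_map lookup_add frob_root_add)

lemma split_map_sum:
  "split_map (p ^ e) u (sum f A :: ('a, 'k) mpoly) = (\<Sum>i\<in>A. split_map (p ^ e) u (f i))"
proof (induction A rule: infinite_finite_induct)
  case (infinite A)
  then show ?case by (auto intro: poly_mapping_eqI simp: lookup_split_map)
next
  case empty
  then show ?case by (auto intro: poly_mapping_eqI simp: lookup_split_map)
qed (simp add: split_map_add)

lemma split_map_single_hit:
  "split_map (p ^ e) u (Poly_Mapping.single (mon_smul (p ^ e) z + u) (c::'k))
    = Poly_Mapping.single z (frob_root (p ^ e) c)"
  by (rule poly_mapping_eqI)
    (auto simp: lookup_split_map lookup_single when_def mon_smul_inj[OF frob_power_pos])

lemma split_map_single_miss:
  assumes "\<And>z. mon_smul (p ^ e) z + u \<noteq> w"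
  shows "split_map (p ^ e) u (Poly_Mapping.single w (c::'k)) = 0"
  by (rule poly_mapping_eqI) (use assms in \<open>auto simp: lookup_split_map lookup_single when_def\<close>)

lemma split_map_single_frob_mult:
  assumes "finite P" "hibi_mon P a" "hibi_mon P b" "gaps_below P (p ^ e) u"
  shows "split_map (p ^ e) u (Poly_Mapping.single a (c::'k) ^ p ^ e * Poly_Mapping.single b c')
       = Poly_Mapping.single a c * split_map (p ^ e) u (Poly_Mapping.single b c')"
proof -
  let ?q = "p ^ e"
  have lhs: "Poly_Mapping.single a c ^ ?q * Poly_Mapping.single b c'
      = Poly_Mapping.single (mon_smul ?q a + b) (c ^ ?q * c')"
    by (simp add: single_power mult_single)
  show ?thesis
  proof (cases "\<exists>z. mon_smul ?q z + u = b")
    case True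
    then obtain z where z: "mon_smul ?q z + u = b" by blast
    then have "mon_smul ?q a + b = mon_smul ?q (a + z) + u"
      by (simp add: mon_smul_add add.assoc)
    then have "split_map ?q u (Poly_Mapping.single a c ^ ?q * Poly_Mapping.single b c')
        = Poly_Mapping.single (a + z) (frob_root ?q (c ^ ?q * c'))"
      unfolding lhs by (simp add: split_map_single_hit)
    also have "\<dots> = Poly_Mapping.single a c * split_map ?q u (Poly_Mapping.single b c')"
      unfolding z[symmetric] by (simp add: split_map_single_hit frob_root_mult mult_single)
    finally show ?thesis .
  next
    case False
    have "mon_smul ?q z + u \<noteq> mon_smul ?q a + b" for z
    proof
      assume "mon_smul ?q z + u = mon_smul ?q a + b"
      then obtain c where "z = a + c"
        using hibi_mon_quotient[OF assms(1) frob_power_pos assms(2,3,4)] by blast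
      with \<open>mon_smul ?q z + u = _\<close> have "mon_smul ?q c + u = b"
        by (simp add: mon_smul_add add.assoc)
      with False show False by blast
    qed
    then show ?thesis
      using False unfolding lhs by (simp add: split_map_single_miss)
  qed
qed

lemma split_map_frob_mult:
  assumes "finite P" "gaps_below P (p ^ e) u" "r \<in> hibi_ring P" "x \<in> hibi_ring P"
  shows "split_map (p ^ e) u ((r :: ('a::order, 'k) mpoly) ^ p ^ e * x) = r * split_map (p ^ e) u x"
proof -
  let ?q = "p ^ e" and ?\<phi> = "split_map (p ^ e) u"
  let ?R = "\<lambda>a. Poly_Mapping.single a (lookup r a)"
    and ?X = "\<lambda>b. Poly_Mapping.single b (lookup x b)"
  have mons: "\<forall>a\<in>keys r. hibi_mon P a" "\<forall>b\<in>keys x. hibi_mon P b"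
    using assms(3,4) hibi_ring_iff[OF assms(1)] by blast+
  have "r ^ ?q * x = (\<Sum>a\<in>keys r. \<Sum>b\<in>keys x. ?R a ^ ?q * ?X b)"
    by (subst (1 2) poly_mapping_sum_single) (simp add: power_sum_frob_mpoly sum_product)
  then have "?\<phi> (r ^ ?q * x) = (\<Sum>a\<in>keys r. \<Sum>b\<in>keys x. ?R a * ?\<phi> (?X b))"
    using split_map_single_frob_mult[OF assms(1) _ _ assms(2)] mons by (simp add: split_map_sum)
  also have "\<dots> = r * ?\<phi> x"
    by (subst (3 4) poly_mapping_sum_single) (simp add: split_map_sum sum_product)
  finally show ?thesis .
qed

lemma split_map_in_hibi_ring:
  assumes "finite P" "gaps_below P (p ^ e) u" "x \<in> hibi_ring P"
  shows "split_map (p ^ e) u (x :: ('a::order, 'k) mpoly) \<in> hibi_ring P"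
  unfolding hibi_ring_iff[OF assms(1)]
proof
  fix z assume "z \<in> keys (split_map (p ^ e) u x)"
  then have "mon_smul (p ^ e) z + u \<in> keys x"
    by (auto simp: in_keys_iff lookup_split_map)
  then have "hibi_mon P (mon_smul (p ^ e) z + u)"
    using assms(3) hibi_ring_iff[OF assms(1)] by blast
  then obtain c where "hibi_mon P c" "z = 0 + c"
    using hibi_mon_quotient[OF assms(1) frob_power_pos hibi_mon_zero _ assms(2), of _ z] by auto
  then show "hibi_mon P z" by simp
qed

lemma frob_splits_single:
  assumes "finite P" "gaps_below P (p ^ e) u"
  shows "frob_splits (hibi_ring P :: ('a::order, 'k) mpoly set) (p ^ e) (Poly_Mapping.single u 1)"
  unfolding frob_splits_def
proof (intro exI[of _ "split_map (p ^ e) u"] conjI ballI)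
  have "split_map (p ^ e) u (Poly_Mapping.single (mon_smul (p ^ e) 0 + u) 1)
      = Poly_Mapping.single 0 (frob_root (p ^ e) (1::'k))"
    by (rule split_map_single_hit)
  then show "split_map (p ^ e) u (Poly_Mapping.single u (1::'k)) = 1" by simp
qed (use split_map_in_hibi_ring[OF assms] split_map_add split_map_frob_mult[OF assms] in auto)

end

section \<open>The lower bound\<close>

lemma hibi_mon_floor_scaled_Sigma:
  assumes "finite P" "\<psi> \<in> Sigma_set P" "0 < q"
  obtains u where "hibi_mon P u" "gaps_below P q u"
    "lookup u None = nat \<lfloor>(real q - 1) * \<psi> NegInf\<rfloor>"
proof -
  define W where "W x = \<lfloor>(real q - 1) * \<psi> x\<rfloor>" for x
  have c_nonneg: "0 \<le> real q - 1" using assms(3) by simp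
  have gaps: "W y \<le> W x \<and> W x < W y + int q" if "covers_in (ext_carrier P) x y" for x y
  proof
    show "W y \<le> W x"
      unfolding W_def using Sigma_setD(1)[OF assms(2) that] c_nonneg
      by (intro floor_mono mult_left_mono)
    have "(real q - 1) * \<psi> x \<le> (real q - 1) * (\<psi> y + 1)"
      using Sigma_setD(2)[OF assms(2) that] c_nonneg by (rule mult_left_mono)
    then have "(real q - 1) * \<psi> x \<le> (real q - 1) * \<psi> y + of_int (int q - 1)"
      using assms(3) by (simp add: algebra_simps of_nat_diff)
    then have "W x \<le> W y + (int q - 1)"
      unfolding W_def by (metis floor_add_int floor_mono)
    then show "W x < W y + int q" by simp
  qed
  have "W PosInf = 0" using assms(2) by (simp add: W_def Sigma_set_def)
  then obtain u where u: "hibi_mon P u" "\<And>x. x \<in> ext_carrier P \<Longrightarrow> expo u x = W x"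
    using hibi_mon_of_fun[OF assms(1), of W] gaps by blast
  have "gaps_below P q u"
    unfolding gaps_below_def
  proof (intro allI impI)
    fix x y assume c: "covers_in (ext_carrier P) x y"
    then show "expo u x - expo u y < int q"
      using gaps[OF c] u(2)[OF covers_inD(1)[OF c]] u(2)[OF covers_inD(2)[OF c]] by simp
  qed
  moreover have "lookup u None = nat (W NegInf)"
    using u(2)[of NegInf] by simp
  ultimately show ?thesis using u(1) that by (simp add: W_def)
qed

context perfect_field_char
begin

lemma F_pure_pair_below_Sigma:
  assumes "finite P" "\<psi> \<in> Sigma_set P" "0 \<le> t" "t < \<psi> NegInf \<or> t = 0"
  shows "F_pure_pair p (hibi_ring P :: ('a::order, 'k) mpoly set) (hibi_max P) t"
proof -
  define s where "s = \<psi> NegInf"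
  have "0 \<le> s" using Sigma_set_nonneg[OF assms(1,2)] by (simp add: s_def)
  obtain e\<^sub>0 where e\<^sub>0: "\<And>e. e\<^sub>0 \<le> e \<Longrightarrow> \<lceil>t * (real (p ^ e) - 1)\<rceil> \<le> \<lfloor>(real (p ^ e) - 1) * s\<rfloor>"
  proof (cases "t = 0")
    case True
    then show ?thesis using that \<open>0 \<le> s\<close> frob_power_pos by fastforce
  next
    case False
    with assms(4) have "t < s" by (simp add: s_def)
    show ?thesis
    proof (rule that[of "nat \<lceil>1 / (s - t)\<rceil>"], rule ceiling_le_floor_if_gap)
      fix e assume "nat \<lceil>1 / (s - t)\<rceil> \<le> e"
      moreover have "e < p ^ e"
        using less_exp[of e] power_mono[of 2 p e] prime_ge_2_nat[OF prime_p] by linarith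
      then have "real (e + 1) \<le> real (p ^ e)" by (simp only: of_nat_le_iff)
      ultimately have "1 / (s - t) \<le> real (p ^ e) - 1" by linarith
      then show "1 \<le> (real (p ^ e) - 1) * (s - t)" using \<open>t < s\<close> by (simp add: field_simps)
    qed
  qed
  show ?thesis
    unfolding F_pure_pair_def
  proof (intro exI[of _ e\<^sub>0] allI impI)
    fix e assume "e\<^sub>0 \<le> e"
    obtain u where u: "hibi_mon P u" "gaps_below P (p ^ e) u"
      "lookup u None = nat \<lfloor>(real (p ^ e) - 1) * s\<rfloor>"
      using hibi_mon_floor_scaled_Sigma[OF assms(1,2) frob_power_pos] by (auto simp: s_def)
    have "nat \<lceil>t * (real (p ^ e) - 1)\<rceil> \<le> lookup u None"
      unfolding u(3) by (rule nat_mono[OF e\<^sub>0[OF \<open>e\<^sub>0 \<le> e\<close>]])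
    then have "Poly_Mapping.single u (1::'k)
        \<in> ideal_pow (hibi_ring P) (hibi_max P) (nat \<lceil>t * (real (p ^ e) - 1)\<rceil>)"
      by (rule single_in_ideal_pow_hibi_max[OF assms(1) u(1)])
    with frob_splits_single[OF assms(1) u(2)]
    show "\<exists>d\<in>ideal_pow (hibi_ring P) (hibi_max P) (nat \<lceil>t * (real (p ^ e) - 1)\<rceil>).
        frob_splits (hibi_ring P :: ('a, 'k) mpoly set) (p ^ e) d" by blast
  qed
qed

end

section \<open>The upper bound\<close>

definition down_set :: "'a::order set \<Rightarrow> 'a ext \<Rightarrow> 'a set" where
  "down_set P z = {a\<in>P. Elt a \<le> z}"

definition not_above_set :: "'a::order set \<Rightarrow> 'a ext \<Rightarrow> 'a set" where
  "not_above_set P z = {a\<in>P. \<not> z \<le> Elt a}"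

lemma down_set_poset_ideal: "down_set P z \<in> poset_ideals P"
  unfolding down_set_def poset_ideals_def by (auto, metis less_eq_ext_simps(3) order.trans)

lemma not_above_set_poset_ideal: "not_above_set P z \<in> poset_ideals P"
  unfolding not_above_set_def poset_ideals_def by (auto, metis less_eq_ext_simps(3) order.trans)

lemma expo_gen_mon_down_set:
  assumes "finite P" "z \<noteq> PosInf" "v \<in> ext_carrier P"
  shows "expo (gen_mon (down_set P z)) v = (if v \<le> z then 1 else 0)"
  using assms by (cases v; cases z) (simp_all add: lookup_gen_mon down_set_def)

lemma expo_gen_mon_not_above_set:
  assumes "finite P" "z \<noteq> NegInf" "v \<in> ext_carrier P"
  shows "expo (gen_mon (not_above_set P z)) v = (if z \<le> v then 0 else 1)"
  using assms by (cases v; cases z) (simp_all add: lookup_gen_mon not_above_set_def)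

text \<open>The witness is the ideal below \<open>x'\<close> or the ideal of elements not above \<open>y'\<close>.\<close>
lemma gen_mon_separates_covers:
  assumes "finite P" "covers_in (ext_carrier P) x y" "covers_in (ext_carrier P) x' y'"
    and "(x', y') \<noteq> (x, y)"
  obtains I where "I \<in> poset_ideals P" "expo (gen_mon I) x = expo (gen_mon I) y"
    "expo (gen_mon I) y' < expo (gen_mon I) x'"
proof -
  note c = covers_inD[OF assms(2)] and c' = covers_inD[OF assms(3)]
  consider "\<not> x \<le> x'" | "\<not> y' \<le> y"
    using covers_in_unique[OF assms(2,3)] assms(4) by blast
  then show ?thesis
  proof cases
    case 1
    have "x' \<noteq> PosInf" using c'(3) by auto
    moreover have "\<not> y \<le> x'" using 1 c(3) by (auto dest: order.trans[OF order.strict_implies_order])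
    ultimately show ?thesis
      using that[OF down_set_poset_ideal[of P x']] 1 c c' expo_gen_mon_down_set[OF assms(1)]
      by (simp add: leD)
  next
    case 2
    have "y' \<noteq> NegInf" using c'(3) by auto
    moreover have "\<not> y' \<le> x"
      using 2 c(3) by (auto dest: order.trans[OF _ order.strict_implies_order])
    ultimately show ?thesis
      using that[OF not_above_set_poset_ideal[of P y']] 2 c c'
        expo_gen_mon_not_above_set[OF assms(1)]
      by (simp add: leD)
  qed
qed

lemma hibi_mon_separating_cover:
  assumes "finite P" "covers_in (ext_carrier P) x y"
  obtains b where "hibi_mon P b" "expo b x = expo b y"
    "\<And>x' y'. covers_in (ext_carrier P) x' y' \<Longrightarrow> (x', y') \<noteq> (x, y) \<Longrightarrow> expo b y' < expo b x'"
proof -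
  define NF where "NF = {I\<in>poset_ideals P. expo (gen_mon I) x = expo (gen_mon I) y}"
  define b where "b = (\<Sum>I\<in>NF. gen_mon I)"
  have "finite NF"
    using assms(1) by (rule finite_subset[rotated, OF finite_Pow_iff[THEN iffD2]])
      (auto simp: NF_def poset_ideals_def)
  have expo_b: "expo b v = (\<Sum>I\<in>NF. expo (gen_mon I) v)" for v
    by (simp add: b_def expo_sum)
  have "hibi_mon P b"
    unfolding b_def by (rule hibi_mon_sum) (simp add: NF_def hibi_mon_gen_mon[OF assms(1)])
  moreover have "expo b x = expo b y"
    unfolding expo_b by (rule sum.cong) (simp_all add: NF_def)
  moreover have "expo b y' < expo b x'"
    if c': "covers_in (ext_carrier P) x' y'" and ne: "(x', y') \<noteq> (x, y)" for x' y'
  proof -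
    obtain I where "I \<in> NF" "expo (gen_mon I) y' < expo (gen_mon I) x'"
      using gen_mon_separates_covers[OF assms c' ne] by (auto simp: NF_def)
    moreover have "\<forall>J\<in>NF. expo (gen_mon J) y' \<le> expo (gen_mon J) x'"
      using hibi_monD(2)[OF hibi_mon_gen_mon[OF assms(1)] c'] by (simp add: NF_def)
    ultimately show ?thesis
      unfolding expo_b using \<open>finite NF\<close> by (intro sum_strict_mono_ex1) auto
  qed
  ultimately show ?thesis using that by blast
qed

text \<open>In the monomial notation this is \<open>x\<^bsup>qb\<^esup> x\<^sup>w = x\<^bsup>qg\<^esup> x\<^bsup>w'\<^esup>\<close>; here \<open>g\<close> is the generator
  of the ideal below \<open>x\<close>, and \<open>b\<close> compensates \<open>q g\<close> on every other cover.\<close>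
lemma hibi_mon_exchange:
  assumes "finite P" "hibi_mon P w" "covers_in (ext_carrier P) x y" "int q \<le> expo w x - expo w y"
  obtains b g w' where "hibi_mon P b" "hibi_mon P g" "hibi_mon P w'"
    "mon_smul q b + w = mon_smul q g + w'" "expo b x = expo b y" "expo g x - expo g y = 1"
proof -
  note c = covers_inD[OF assms(3)]
  obtain b where b: "hibi_mon P b" "expo b x = expo b y"
    "\<And>x' y'. covers_in (ext_carrier P) x' y' \<Longrightarrow> (x', y') \<noteq> (x, y) \<Longrightarrow> expo b y' < expo b x'"
    using hibi_mon_separating_cover[OF assms(1,3)] by blast
  define g where "g = gen_mon (down_set P x)"
  have g: "hibi_mon P g"
    unfolding g_def by (rule hibi_mon_gen_mon[OF assms(1) down_set_poset_ideal])
  have "x \<noteq> PosInf" using c(3) by auto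
  then have expo_g: "v \<in> ext_carrier P \<Longrightarrow> expo g v = (if v \<le> x then 1 else 0)" for v
    unfolding g_def by (rule expo_gen_mon_down_set[OF assms(1)])
  have g_gap: "expo g x - expo g y = 1" using c expo_g by (simp add: leD)
  define W where "W v = expo w v + int q * expo b v - int q * expo g v" for v
  have "W y' \<le> W x'" if c': "covers_in (ext_carrier P) x' y'" for x' y'
  proof (cases "(x', y') = (x, y)")
    case True
    then show ?thesis using assms(4) b(2) g_gap by (simp add: W_def algebra_simps)
  next
    case False
    have "expo g x' - expo g y' \<le> 1"
      using expo_g covers_inD[OF c'] by simp
    also have "\<dots> \<le> expo b x' - expo b y'" using b(3)[OF c' False] by simp
    finally have "int q * (expo g x' - expo g y') \<le> int q * (expo b x' - expo b y')"
      by (simp add: mult_left_mono)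
    then show ?thesis using hibi_monD(2)[OF assms(2) c'] by (simp add: W_def algebra_simps)
  qed
  moreover have "W PosInf = 0" by (simp add: W_def)
  ultimately obtain w' where w': "hibi_mon P w'" "\<And>v. v \<in> ext_carrier P \<Longrightarrow> expo w' v = W v"
    using hibi_mon_of_fun[OF assms(1)] by metis
  have "mon_smul q b + w = mon_smul q g + w'"
    using hibi_monD(1)[OF hibi_mon_add[OF hibi_mon_mon_smul[OF b(1)] assms(2)]]
      hibi_monD(1)[OF hibi_mon_add[OF hibi_mon_mon_smul[OF g] w'(1)]]
    by (rule monomial_eqI_expo) (simp add: w'(2) W_def)
  with b(1,2) g w'(1) g_gap that show ?thesis by blast
qed

lemma gaps_below_if_split_nonzero:
  fixes \<phi> :: "('a::order, 'k::comm_ring_1) mpoly \<Rightarrow> ('a, 'k) mpoly"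
  assumes "finite P" "hibi_mon P w"
    and \<phi>_closed: "\<forall>x\<in>hibi_ring P. \<phi> x \<in> hibi_ring P"
    and \<phi>_linear: "\<forall>r\<in>hibi_ring P. \<forall>x\<in>hibi_ring P. \<phi> (r ^ q * x) = r * \<phi> x"
    and nonzero: "lookup (\<phi> (Poly_Mapping.single w 1)) 0 \<noteq> 0"
  shows "gaps_below P q w"
proof (unfold gaps_below_def, intro allI impI, rule ccontr)
  fix x y assume c: "covers_in (ext_carrier P) x y" and "\<not> expo w x - expo w y < int q"
  then obtain b g w' where b: "hibi_mon P b" and g: "hibi_mon P g" and w': "hibi_mon P w'"
    and eq: "mon_smul q b + w = mon_smul q g + w'"
    and gaps: "expo b x = expo b y" "expo g x - expo g y = 1"
    using hibi_mon_exchange[OF assms(1,2) c] by (metis not_less)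
  let ?X = "\<lambda>v. Poly_Mapping.single v (1::'k)"
  have "?X b ^ q * ?X w = ?X g ^ q * ?X w'"
    using eq by (simp add: single_power mult_single)
  then have key: "?X b * \<phi> (?X w) = ?X g * \<phi> (?X w')"
    using \<phi>_linear single_in_hibi_ring[OF assms(1)] b g w' assms(2) by metis
  have "lookup (?X b * \<phi> (?X w)) (b + 0) \<noteq> 0"
    using nonzero by (simp only: lookup_single_mult) simp
  moreover have "lookup (?X g * \<phi> (?X w')) b = 0"
  proof (rule ccontr)
    assume "lookup (?X g * \<phi> (?X w')) b \<noteq> 0"
    then obtain k where k: "k \<in> keys (\<phi> (?X w'))" "b = g + k"
      using keys_mult[of "?X g" "\<phi> (?X w')"] by (auto simp: in_keys_iff)
    have "hibi_mon P k"
      using \<phi>_closed single_in_hibi_ring[OF assms(1) w'] k(1) hibi_ring_iff[OF assms(1)] by blast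
    then have "expo k y \<le> expo k x" using c by (rule hibi_monD(2))
    with k(2) gaps show False by simp
  qed
  ultimately show False using key by simp
qed

lemma Sigma_set_expo_scaled:
  assumes "hibi_mon P w" "gaps_below P q w" "2 \<le> q"
  shows "(\<lambda>v. expo w v / (real q - 1)) \<in> Sigma_set P"
proof -
  have "0 \<le> expo w x / (real q - 1) - expo w y / (real q - 1)
      \<and> expo w x / (real q - 1) - expo w y / (real q - 1) \<le> 1"
    if c: "covers_in (ext_carrier P) x y" for x y
  proof -
    have "0 \<le> expo w x - expo w y" "expo w x - expo w y \<le> int q - 1"
      using hibi_monD(2)[OF assms(1) c] gaps_belowD[OF assms(2) c] by simp_all
    then have "0 \<le> real_of_int (expo w x - expo w y)"
      "real_of_int (expo w x - expo w y) \<le> real q - 1"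
      by linarith+
    then show ?thesis using assms(3) by (simp add: diff_divide_distrib[symmetric] divide_le_eq_1)
  qed
  then show ?thesis by (simp add: Sigma_set_def)
qed

context perfect_field_char
begin

lemma frob_split_witness:
  fixes \<phi> :: "('a::order, 'k) mpoly \<Rightarrow> ('a, 'k) mpoly"
  assumes "finite P" "d \<in> hibi_ring P"
    and \<phi>_closed: "\<forall>x\<in>hibi_ring P. \<phi> x \<in> hibi_ring P"
    and \<phi>_add: "\<forall>x\<in>hibi_ring P. \<forall>y\<in>hibi_ring P. \<phi> (x + y) = \<phi> x + \<phi> y"
    and \<phi>_linear: "\<forall>r\<in>hibi_ring P. \<forall>x\<in>hibi_ring P. \<phi> (r ^ p ^ e * x) = r * \<phi> x"
    and "\<phi> d = 1"
  obtains w where "w \<in> keys d" "lookup (\<phi> (Poly_Mapping.single w 1)) 0 \<noteq> 0"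
proof -
  let ?q = "p ^ e" and ?X = "\<lambda>v. Poly_Mapping.single v (1::'k)"
  let ?c = "\<lambda>w. Poly_Mapping.single 0 (frob_root ?q (lookup d w))"
  have mons: "hibi_mon P w" if "w \<in> keys d" for w
    using assms(2) that hibi_ring_iff[OF assms(1)] by blast
  have "\<phi> 0 = \<phi> 0 + \<phi> 0" using \<phi>_add zero_in_hibi_ring by (metis add_0)
  then have \<phi>_zero: "\<phi> 0 = 0" by simp
  have \<phi>_sum: "\<phi> (sum f A) = (\<Sum>i\<in>A. \<phi> (f i))"
    if "finite A" "\<And>i. i \<in> A \<Longrightarrow> f i \<in> hibi_ring P" for f :: "_ \<Rightarrow> ('a, 'k) mpoly" and A
    using that by (induction A rule: finite_induct) (simp_all add: \<phi>_zero \<phi>_add sum_in_hibi_ring)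
  have summand: "\<phi> (Poly_Mapping.single w (lookup d w)) = ?c w * \<phi> (?X w)" if "w \<in> keys d" for w
  proof -
    have "Poly_Mapping.single w (lookup d w) = ?c w ^ ?q * ?X w"
      by (simp add: single_power mult_single)
    then show ?thesis
      using \<phi>_linear hibi_ring.const single_in_hibi_ring[OF assms(1) mons[OF that]] by metis
  qed
  have "1 = \<phi> (\<Sum>w\<in>keys d. Poly_Mapping.single w (lookup d w))"
    using \<open>\<phi> d = 1\<close> by (simp flip: poly_mapping_sum_single)
  also have "\<dots> = (\<Sum>w\<in>keys d. \<phi> (Poly_Mapping.single w (lookup d w)))"
    by (rule \<phi>_sum[OF finite_keys]) (rule single_in_hibi_ring[OF assms(1) mons])
  also have "\<dots> = (\<Sum>w\<in>keys d. ?c w * \<phi> (?X w))"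
    by (rule sum.cong) (simp_all add: summand)
  finally have "lookup (1 :: ('a, 'k) mpoly) 0 = lookup (\<Sum>w\<in>keys d. ?c w * \<phi> (?X w)) 0"
    by (rule arg_cong)
  also have "\<dots> = (\<Sum>w\<in>keys d. frob_root ?q (lookup d w) * lookup (\<phi> (?X w)) 0)"
  proof -
    have "lookup (Poly_Mapping.single 0 c * f) 0 = c * lookup f 0"
      for c :: 'k and f :: "('a, 'k) mpoly"
      using lookup_single_mult[of 0 c f 0] by simp
    then show ?thesis by (simp add: lookup_sum)
  qed
  finally have one: "(1::'k) = (\<Sum>w\<in>keys d. frob_root ?q (lookup d w) * lookup (\<phi> (?X w)) 0)"
    by simp
  have "\<exists>w\<in>keys d. lookup (\<phi> (?X w)) 0 \<noteq> 0"
  proof (rule ccontr)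
    assume "\<not> ?thesis"
    then have "(\<Sum>w\<in>keys d. frob_root ?q (lookup d w) * lookup (\<phi> (?X w)) 0) = 0" by simp
    with one show False by simp
  qed
  with that show ?thesis by blast
qed

lemma F_pure_pair_le_Sigma:
  assumes "finite P" "F_pure_pair p (hibi_ring P :: ('a::order, 'k) mpoly set) (hibi_max P) t"
  obtains \<psi> where "\<psi> \<in> Sigma_set P" "t \<le> \<psi> NegInf"
proof -
  obtain e\<^sub>0 where e\<^sub>0: "\<And>e. e\<^sub>0 \<le> e
      \<Longrightarrow> \<exists>d\<in>ideal_pow (hibi_ring P) (hibi_max P) (nat \<lceil>t * (real (p ^ e) - 1)\<rceil>).
        frob_splits (hibi_ring P :: ('a, 'k) mpoly set) (p ^ e) d"
    using assms(2) unfolding F_pure_pair_def by blast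
  define e where "e = Suc e\<^sub>0"
  let ?q = "p ^ e"
  have "p \<le> p * p ^ e\<^sub>0" using frob_power_pos[of e\<^sub>0] by simp
  then have "2 \<le> ?q" using prime_ge_2_nat[OF prime_p] unfolding e_def power_Suc by linarith
  then have "(2::real) \<le> real ?q" by (metis of_nat_numeral of_nat_le_iff)
  obtain d where d: "d \<in> ideal_pow (hibi_ring P) (hibi_max P) (nat \<lceil>t * (real ?q - 1)\<rceil>)"
    and "frob_splits (hibi_ring P :: ('a, 'k) mpoly set) ?q d"
    using e\<^sub>0[of e] by (auto simp: e_def)
  then obtain \<phi> :: "('a, 'k) mpoly \<Rightarrow> ('a, 'k) mpoly" where
    \<phi>: "\<forall>x\<in>hibi_ring P. \<phi> x \<in> hibi_ring P" "\<forall>x\<in>hibi_ring P. \<forall>y\<in>hibi_ring P. \<phi> (x + y) = \<phi> x + \<phi> y"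
      "\<forall>r\<in>hibi_ring P. \<forall>x\<in>hibi_ring P. \<phi> (r ^ ?q * x) = r * \<phi> x" "\<phi> d = 1"
    unfolding frob_splits_def by blast
  have "d \<in> hibi_T_deg_ge P (nat \<lceil>t * (real ?q - 1)\<rceil>)"
    using ideal_pow_hibi_max_subset[OF assms(1)] d by blast
  then obtain w where w: "w \<in> keys d" "nat \<lceil>t * (real ?q - 1)\<rceil> \<le> lookup w None"
    and nonzero: "lookup (\<phi> (Poly_Mapping.single w 1)) 0 \<noteq> 0"
    using frob_split_witness[OF assms(1) _ \<phi>] by (auto simp: hibi_T_deg_ge_def)
  have "hibi_mon P w"
    using \<open>d \<in> hibi_T_deg_ge P _\<close> w(1) hibi_ring_iff[OF assms(1)] by (auto simp: hibi_T_deg_ge_def)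
  with gaps_below_if_split_nonzero[OF assms(1) _ \<phi>(1,3) nonzero]
  have \<psi>: "(\<lambda>v. expo w v / (real ?q - 1)) \<in> Sigma_set P"
    using Sigma_set_expo_scaled \<open>2 \<le> ?q\<close> by blast
  have "t * (real ?q - 1) \<le> lookup w None" using w(2) by linarith
  then have "t \<le> expo w NegInf / (real ?q - 1)"
    using \<open>2 \<le> real ?q\<close> by (simp add: pos_le_divide_eq)
  with \<psi> that show ?thesis by blast
qed

end

theorem theorem3p7:
  fixes P :: "'a::order set" and p :: nat
  assumes "finite P"
    and "prime p" and "CHAR('k::field) = p"
    and "\<forall>x::'k. \<exists>y. y ^ p = x"
  shows "(\<exists>\<psi>\<in>Sigma_set P.
            fpt p (hibi_ring P :: ('a, 'k) mpoly set) (hibi_max P) = \<psi> NegInf)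
       \<and> (\<forall>\<psi>\<in>Sigma_set P.
            \<psi> NegInf \<le> fpt p (hibi_ring P :: ('a, 'k) mpoly set) (hibi_max P))"
proof -
  interpret perfect_field_char p "TYPE('k)"
    using assms(2-4) by unfold_locales
  let ?R = "hibi_ring P :: ('a, 'k) mpoly set"
  obtain \<psi>\<^sub>0 where \<psi>\<^sub>0: "\<psi>\<^sub>0 \<in> Sigma_set P"
    and max: "\<And>\<psi>. \<psi> \<in> Sigma_set P \<Longrightarrow> \<psi> NegInf \<le> \<psi>\<^sub>0 NegInf"
    using Sigma_set_has_max[OF assms(1)] by blast
  have "fpt p ?R (hibi_max P) = \<psi>\<^sub>0 NegInf"
    unfolding fpt_def
  proof (rule Sup_eq_of_interval)
    show "0 \<le> \<psi>\<^sub>0 NegInf" using Sigma_set_nonneg[OF assms(1) \<psi>\<^sub>0] by simp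
    show "F_pure_pair p ?R (hibi_max P) t" if "0 \<le> t" "t < \<psi>\<^sub>0 NegInf" for t
      using F_pure_pair_below_Sigma[OF assms(1) \<psi>\<^sub>0 that(1)] that(2) by blast
    show "F_pure_pair p ?R (hibi_max P) 0"
      using F_pure_pair_below_Sigma[OF assms(1) \<psi>\<^sub>0, of 0] by simp
    show "t \<le> \<psi>\<^sub>0 NegInf" if F: "F_pure_pair p ?R (hibi_max P) t" for t
    proof -
      obtain \<psi> where "\<psi> \<in> Sigma_set P" "t \<le> \<psi> NegInf"
        using F_pure_pair_le_Sigma[OF assms(1) F] by blast
      then show ?thesis using max[of \<psi>] by linarith
    qed
  qed
  with \<psi>\<^sub>0 max show ?thesis by auto
qed

end
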